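(* Let $G$ be a finite group, $K\unlhd H\le G$ with $H/K$ cyclic, $A\unlhd H$, and $D=K\cap A$. Then $\varepsilon(A,D)=\varepsilon(H,K)+e$ for some central idempotent $e$ of $\mathbb{Q}H$ orthogonal to $\varepsilon(H,K)$.
   Context: For $K\unlhd H$: $\widehat{H}=\frac1{|H|}\sum_{h\in H}h$; $\varepsilon(H,K)=\widehat K$ if $H=K$, and otherwise $\varepsilon(H,K)=\prod(\widehat K-\widehat L)$, the product over all $L\unlhd H$ with $K\subsetneq L$ and $L/K$ a minimal normal subgroup of $H/K$. *)

theory Defs
  imports "HOL-Algebra.Algebra"
begin

text \<open>Rational group algebra of a finite group G, elements represented as functions
  carrier G \<rightarrow> rat (zero outside carrier G).  The group algebra QH of a subgroup H
  is the subalgebra of functions supported on H.\<close>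

definition ga_mult :: "('a, 'b) monoid_scheme \<Rightarrow> ('a \<Rightarrow> rat) \<Rightarrow> ('a \<Rightarrow> rat) \<Rightarrow> ('a \<Rightarrow> rat)" where
  "ga_mult G x y = (\<lambda>g. if g \<in> carrier G
      then (\<Sum>h\<in>carrier G. x h * y (inv\<^bsub>G\<^esub> h \<otimes>\<^bsub>G\<^esub> g)) else 0)"

definition ga_sub :: "('a \<Rightarrow> rat) \<Rightarrow> ('a \<Rightarrow> rat) \<Rightarrow> ('a \<Rightarrow> rat)" where
  "ga_sub x y = (\<lambda>g. x g - y g)"

definition ga_add :: "('a \<Rightarrow> rat) \<Rightarrow> ('a \<Rightarrow> rat) \<Rightarrow> ('a \<Rightarrow> rat)" where
  "ga_add x y = (\<lambda>g. x g + y g)"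

definition in_ga :: "'a set \<Rightarrow> ('a \<Rightarrow> rat) \<Rightarrow> bool" where
  "in_ga H x \<longleftrightarrow> (\<forall>g. g \<notin> H \<longrightarrow> x g = 0)"

definition hat :: "'a set \<Rightarrow> ('a \<Rightarrow> rat)" where
  "hat K = (\<lambda>g. if g \<in> K then 1 / of_nat (card K) else 0)"

text \<open>Product (in the group algebra of G) of the elements f L, L ranging over a finite
  set S, taken in some enumeration order (all uses below have commuting factors);
  empty product is the identity element.\<close>
definition ga_prod :: "('a, 'b) monoid_scheme \<Rightarrow> 'c set \<Rightarrow> ('c \<Rightarrow> ('a \<Rightarrow> rat)) \<Rightarrow> ('a \<Rightarrow> rat)" where
  "ga_prod G S f = foldr (\<lambda>L acc. ga_mult G (f L) acc)
      (SOME xs. distinct xs \<and> set xs = S) (hat {\<one>\<^bsub>G\<^esub>})"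

definition minimal_normal :: "('c, 'd) monoid_scheme \<Rightarrow> 'c set \<Rightarrow> bool" where
  "minimal_normal Q N \<longleftrightarrow> N \<lhd> Q \<and> N \<noteq> {\<one>\<^bsub>Q\<^esub>} \<and>
     (\<forall>M. M \<lhd> Q \<longrightarrow> M \<subseteq> N \<longrightarrow> M = {\<one>\<^bsub>Q\<^esub>} \<or> M = N)"

text \<open>Here H is viewed as the group \<open>G\<lparr>carrier := H\<rparr>\<close> and
  \<open>L/K = {K l | l \<in> L}\<close> as a subgroup of \<open>H Mod K\<close>.\<close>
definition min_normal_over :: "('a, 'b) monoid_scheme \<Rightarrow> 'a set \<Rightarrow> 'a set \<Rightarrow> 'a set set" where
  "min_normal_over G H K = {L. L \<lhd> G\<lparr>carrier := H\<rparr> \<and> K \<subset> L \<and>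
      minimal_normal (G\<lparr>carrier := H\<rparr> Mod K) ((\<lambda>l. K #>\<^bsub>G\<^esub> l) ` L)}"

definition eps :: "('a, 'b) monoid_scheme \<Rightarrow> 'a set \<Rightarrow> 'a set \<Rightarrow> ('a \<Rightarrow> rat)" where
  "eps G H K = (if H = K then hat K
     else ga_prod G (min_normal_over G H K) (\<lambda>L. ga_sub (hat K) (hat L)))"

end

(*
  \<epsilon>(H,K) is a product of the pairwise commuting central idempotents \<widehat>K - \<widehat>L of \<rat>H, hence
  a central idempotent of \<rat>H; the same holds for \<epsilon>(A,D), D = K \<inter> A, once the subgroups M
  occurring in it are known to be normal in H.  This is where H/K abelian enters: for such an M
  the subgroup KM is normal in H, KM \<inter> A = M (so M is normal in H too), and KM/K is a minimal
  normal subgroup of H/K.  As \<widehat>M \<widehat>K = \<widehat>(KM), the factor \<widehat>K - \<widehat>(KM) of \<epsilon>(H,K) is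
  annihilated by \<widehat>M, whereas \<widehat>D fixes \<epsilon>(H,K) because D \<subseteq> K.  Hence
  \<epsilon>(A,D) \<epsilon>(H,K) = \<epsilon>(H,K), and e = \<epsilon>(A,D) - \<epsilon>(H,K) is a central idempotent
  orthogonal to \<epsilon>(H,K).
*)

theory Submission
  imports Defs
begin

section \<open>Normal subgroups and minimal normal sections\<close>

context group begin

lemma inv_mult_cancel_left: "x \<in> carrier G \<Longrightarrow> y \<in> carrier G \<Longrightarrow> inv x \<otimes> (x \<otimes> y) = y"
  by (simp add: m_assoc[symmetric])

lemma mult_inv_cancel_left: "x \<in> carrier G \<Longrightarrow> y \<in> carrier G \<Longrightarrow> x \<otimes> (inv x \<otimes> y) = y"
  by (simp add: m_assoc[symmetric])

lemma rcos_eq_rcos_iff: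
  assumes K: "subgroup K G" and x: "x \<in> carrier G" and y: "y \<in> carrier G"
  shows "K #> x = K #> y \<longleftrightarrow> x \<otimes> inv y \<in> K"
proof
  assume "K #> x = K #> y"
  then have "x \<in> K #> y" using rcos_self[OF x K] by simp
  then show "x \<otimes> inv y \<in> K" by (rule subgroup.rcos_module_imp[OF K is_group y])
next
  assume "x \<otimes> inv y \<in> K"
  then have "x \<in> K #> y" by (rule subgroup.rcos_module_rev[OF K is_group y x])
  then show "K #> x = K #> y" by (rule repr_independence[OF _ y K, symmetric])
qed

lemma rcos_eq_self_iff:
  assumes K: "subgroup K G" and x: "x \<in> carrier G"
  shows "K #> x = K \<longleftrightarrow> x \<in> K"
  using rcos_self[OF x K] coset_join2[OF x K] by blast

lemma group_hom_Mod: "K \<lhd> G \<Longrightarrow> group_hom G (G Mod K) (\<lambda>a. K #> a)"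
  unfolding group_hom_def group_hom_axioms_def
  using is_group normal.factorgroup_is_group normal.r_coset_hom_Mod by blast

lemma normal_image_Mod:
  assumes K: "K \<lhd> G" and L: "L \<lhd> G"
  shows "(\<lambda>l. K #> l) ` L \<lhd> G Mod K"
  by (rule normal.surj_hom_normal_subgroup[OF L group_hom_Mod[OF K]])
     (simp add: carrier_FactGroup)

lemma subgroup_Mod_eq_image:
  assumes "subgroup M (G Mod K)"
  shows "M = (\<lambda>x. K #> x) ` {x \<in> carrier G. K #> x \<in> M}"
proof
  show "M \<subseteq> (\<lambda>x. K #> x) ` {x \<in> carrier G. K #> x \<in> M}"
  proof
    fix m assume "m \<in> M"
    moreover obtain x where "x \<in> carrier G" "m = K #> x"
      using \<open>m \<in> M\<close> subgroup.subset[OF assms] by (auto simp: carrier_FactGroup)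
    ultimately show "m \<in> (\<lambda>x. K #> x) ` {x \<in> carrier G. K #> x \<in> M}" by blast
  qed
qed blast

lemma subset_set_mult_left:
  assumes "subgroup K G" "M \<subseteq> carrier G"
  shows "M \<subseteq> K <#> M"
proof
  fix m assume "m \<in> M"
  moreover have "m = \<one> \<otimes> m" using \<open>m \<in> M\<close> assms(2) by auto
  ultimately show "m \<in> K <#> M" using subgroup.one_closed[OF assms(1)] unfolding set_mult_def by blast
qed

lemma subset_set_mult_right:
  assumes "subgroup M G" "K \<subseteq> carrier G"
  shows "K \<subseteq> K <#> M"
proof
  fix k assume "k \<in> K"
  moreover have "k = k \<otimes> \<one>" using \<open>k \<in> K\<close> assms(2) by auto
  ultimately show "k \<in> K <#> M" using subgroup.one_closed[OF assms(1)] unfolding set_mult_def by blast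
qed

lemma subgroup_mult_left_mem_iff:
  assumes "subgroup S G" "h \<in> S" "g \<in> carrier G"
  shows "h \<otimes> g \<in> S \<longleftrightarrow> g \<in> S"
proof
  assume "h \<otimes> g \<in> S"
  with subgroup.m_inv_closed[OF assms(1,2)] have "inv h \<otimes> (h \<otimes> g) \<in> S"
    by (rule subgroup.m_closed[OF assms(1)])
  moreover have "inv h \<otimes> (h \<otimes> g) = g"
    using assms(2,3) subgroup.subset[OF assms(1)] by (auto simp: inv_mult_cancel_left)
  ultimately show "g \<in> S" by simp
next
  assume "g \<in> S"
  then show "h \<otimes> g \<in> S" by (rule subgroup.m_closed[OF assms(1,2)])
qed

lemma subgroup_mult_right_mem_iff:
  assumes "subgroup S G" "h \<in> S" "g \<in> carrier G"
  shows "g \<otimes> h \<in> S \<longleftrightarrow> g \<in> S"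
proof
  assume "g \<otimes> h \<in> S"
  then have "(g \<otimes> h) \<otimes> inv h \<in> S"
    using subgroup.m_inv_closed[OF assms(1,2)] by (rule subgroup.m_closed[OF assms(1)])
  moreover have "(g \<otimes> h) \<otimes> inv h = g"
    using assms(2,3) subgroup.subset[OF assms(1)] by (auto simp: m_assoc)
  ultimately show "g \<in> S" by simp
next
  assume "g \<in> S"
  then show "g \<otimes> h \<in> S" by (rule subgroup.m_closed[OF assms(1) _ assms(2)])
qed

end

lemma (in group_hom) normal_vimage:
  assumes N: "N \<lhd> H"
  shows "{x \<in> carrier G. h x \<in> N} \<lhd> G"
proof -
  have NH: "subgroup N H" by (rule normal_imp_subgroup[OF N])
  show ?thesis
  proof (rule G.normal_invI)
    show "subgroup {x \<in> carrier G. h x \<in> N} G"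
      using subgroup.one_closed[OF NH] subgroup.m_closed[OF NH] subgroup.m_inv_closed[OF NH]
      by (intro G.subgroupI) auto
  next
    fix x y assume x: "x \<in> carrier G" and y: "y \<in> {x \<in> carrier G. h x \<in> N}"
    then have "h x \<otimes>\<^bsub>H\<^esub> h y \<otimes>\<^bsub>H\<^esub> inv\<^bsub>H\<^esub> (h x) \<in> N"
      using normal.inv_op_closed2[OF N] by simp
    then show "x \<otimes> y \<otimes> inv x \<in> {x \<in> carrier G. h x \<in> N}" using x y by simp
  qed
qed

context group begin

lemma minimal_normal_ModI:
  assumes K: "K \<lhd> G" and L: "L \<lhd> G" and KL: "K \<subset> L"
    and between: "\<And>N. N \<lhd> G \<Longrightarrow> K \<subseteq> N \<Longrightarrow> N \<subseteq> L \<Longrightarrow> N = K \<or> N = L"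
  shows "minimal_normal (G Mod K) ((\<lambda>l. K #> l) ` L)"
  unfolding minimal_normal_def
proof (intro conjI allI impI)
  have sK: "subgroup K G" by (rule normal_imp_subgroup[OF K])
  have LC: "L \<subseteq> carrier G" by (rule subgroup.subset[OF normal_imp_subgroup[OF L]])
  show "(\<lambda>l. K #> l) ` L \<lhd> G Mod K" by (rule normal_image_Mod[OF K L])
  obtain l where "l \<in> L" "l \<notin> K" using KL by blast
  then have "K #> l \<noteq> K" using rcos_eq_self_iff[OF sK] LC by blast
  then show "(\<lambda>l. K #> l) ` L \<noteq> {\<one>\<^bsub>G Mod K\<^esub>}" using \<open>l \<in> L\<close> by auto
  fix M assume M: "M \<lhd> G Mod K" and MsubL: "M \<subseteq> (\<lambda>l. K #> l) ` L"
  define N where "N = {x \<in> carrier G. K #> x \<in> M}"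
  have N: "N \<lhd> G"
    unfolding N_def by (rule group_hom.normal_vimage[OF group_hom_Mod[OF K] M])
  have MN: "M = (\<lambda>x. K #> x) ` N"
    unfolding N_def by (rule subgroup_Mod_eq_image[OF normal_imp_subgroup[OF M]])
  have KN: "K \<subseteq> N"
  proof
    fix k assume k: "k \<in> K"
    then have "k \<in> carrier G" using subgroup.subset[OF sK] by blast
    moreover have "K #> k \<in> M"
      using subgroup.one_closed[OF normal_imp_subgroup[OF M]] coset_join2[OF _ sK k] calculation
      by simp
    ultimately show "k \<in> N" by (simp add: N_def)
  qed
  have NL: "N \<subseteq> L"
  proof
    fix x assume "x \<in> N"
    then have x: "x \<in> carrier G" "K #> x \<in> M" by (auto simp: N_def)
    then obtain l where l: "l \<in> L" "K #> x = K #> l" using MsubL by blast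
    have lC: "l \<in> carrier G" using l LC by blast
    have "x \<otimes> inv l \<in> K" using rcos_eq_rcos_iff[OF sK x(1) lC] l(2) by simp
    then have "x \<otimes> inv l \<in> L" using KL by blast
    then have "(x \<otimes> inv l) \<otimes> l \<in> L"
      using l(1) by (rule subgroup.m_closed[OF normal_imp_subgroup[OF L]])
    then show "x \<in> L" using x(1) lC by (simp add: m_assoc)
  qed
  have "(\<lambda>x. K #> x) ` K = {K}"
    using coset_join2[OF _ sK] subgroup.subset[OF sK] subgroup.one_closed[OF sK]
    by (auto intro!: image_eqI[where x = \<one>])
  with MN have "N = K \<Longrightarrow> M = {\<one>\<^bsub>G Mod K\<^esub>}" by simp
  with MN show "M = {\<one>\<^bsub>G Mod K\<^esub>} \<or> M = (\<lambda>l. K #> l) ` L"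
    using between[OF N KN NL] by blast
qed

lemma minimal_normal_ModD:
  assumes K: "K \<lhd> G" and L: "L \<lhd> G"
    and mn: "minimal_normal (G Mod K) ((\<lambda>l. K #> l) ` L)"
    and N: "N \<lhd> G" and KN: "K \<subseteq> N" and NL: "N \<subseteq> L"
  shows "N = K \<or> N = L"
proof -
  have sK: "subgroup K G" by (rule normal_imp_subgroup[OF K])
  have sN: "subgroup N G" by (rule normal_imp_subgroup[OF N])
  have NC: "N \<subseteq> carrier G" by (rule subgroup.subset[OF sN])
  have LC: "L \<subseteq> carrier G" by (rule subgroup.subset[OF normal_imp_subgroup[OF L]])
  have minimal: "M = {\<one>\<^bsub>G Mod K\<^esub>} \<or> M = (\<lambda>l. K #> l) ` L"
    if "M \<lhd> G Mod K" "M \<subseteq> (\<lambda>l. K #> l) ` L" for M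
    using mn that unfolding minimal_normal_def by blast
  have "(\<lambda>l. K #> l) ` N = {K} \<or> (\<lambda>l. K #> l) ` N = (\<lambda>l. K #> l) ` L"
    using minimal[OF normal_image_Mod[OF K N] image_mono[OF NL]] by simp
  then show ?thesis
  proof
    assume NK_eq: "(\<lambda>l. K #> l) ` N = {K}"
    have "N \<subseteq> K"
    proof
      fix n assume "n \<in> N"
      then have "K #> n = K" using NK_eq by blast
      then show "n \<in> K" using rcos_eq_self_iff[OF sK] \<open>n \<in> N\<close> NC by blast
    qed
    then show ?thesis using KN by blast
  next
    assume NL_eq: "(\<lambda>l. K #> l) ` N = (\<lambda>l. K #> l) ` L"
    have "L \<subseteq> N"
    proof
      fix l assume l: "l \<in> L"
      then obtain n where n: "n \<in> N" "K #> l = K #> n" using NL_eq by (metis imageE imageI)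
      have lC: "l \<in> carrier G" and nC: "n \<in> carrier G" using l n LC NC by auto
      have "l \<otimes> inv n \<in> K" using rcos_eq_rcos_iff[OF sK lC nC] n(2) by simp
      then have "l \<otimes> inv n \<in> N" using KN by blast
      then have "(l \<otimes> inv n) \<otimes> n \<in> N" using n(1) by (rule subgroup.m_closed[OF sN])
      then show "l \<in> N" using lC nC by (simp add: m_assoc)
    qed
    then show ?thesis using NL by blast
  qed
qed

lemma exists_minimal_normal_Mod:
  assumes fin: "finite (carrier G)" and K: "K \<lhd> G" and ne: "K \<noteq> carrier G"
  shows "\<exists>L. L \<lhd> G \<and> K \<subset> L \<and> minimal_normal (G Mod K) ((\<lambda>l. K #> l) ` L)"
proof -
  define P where "P n \<longleftrightarrow> (\<exists>L. L \<lhd> G \<and> K \<subset> L \<and> card L = n)" for n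
  have "carrier G \<lhd> G" by (rule normal_invI) (auto intro: subgroup_self)
  then have "P (card (carrier G))"
    unfolding P_def using subgroup.subset[OF normal_imp_subgroup[OF K]] ne by blast
  then obtain n where Pn: "P n" and least: "\<And>m. m < n \<Longrightarrow> \<not> P m"
    using exists_least_iff[of P] by blast
  then obtain L where L: "L \<lhd> G" "K \<subset> L" "card L = n" unfolding P_def by blast
  have finL: "finite L"
    using finite_subset[OF subgroup.subset[OF normal_imp_subgroup[OF L(1)]] fin] .
  have "minimal_normal (G Mod K) ((\<lambda>l. K #> l) ` L)"
  proof (rule minimal_normal_ModI[OF K L(1,2)])
    fix N assume N: "N \<lhd> G" "K \<subseteq> N" "N \<subseteq> L"
    show "N = K \<or> N = L"
    proof (rule ccontr)
      assume "\<not> (N = K \<or> N = L)"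
      then have "K \<subset> N" "card N < n" using N finL L(3) psubset_card_mono by auto
      then show False using least N(1) unfolding P_def by blast
    qed
  qed
  then show ?thesis using L by blast
qed

lemma normal_if_comm_Mod:
  assumes K: "K \<lhd> G" and ab: "comm_group (G Mod K)" and N: "subgroup N G" and KN: "K \<subseteq> N"
  shows "N \<lhd> G"
proof (rule normal_invI[OF N])
  fix x h assume x: "x \<in> carrier G" and h: "h \<in> N"
  have hC: "h \<in> carrier G" using h subgroup.subset[OF N] by blast
  have "(K #> x) <#> (K #> h) = (K #> h) <#> (K #> x)"
    using comm_monoid.m_comm[OF comm_group.axioms(1)[OF ab]] x hC by (simp add: carrier_FactGroup)
  then have "K #> (x \<otimes> h) = K #> (h \<otimes> x)" using normal.rcos_sum[OF K] x hC by simp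
  then have "(x \<otimes> h) \<otimes> inv (h \<otimes> x) \<in> N"
    using rcos_eq_rcos_iff[OF normal_imp_subgroup[OF K]] x hC KN by auto
  moreover have "(x \<otimes> h) \<otimes> inv (h \<otimes> x) = (x \<otimes> h \<otimes> inv x) \<otimes> inv h"
    using x hC by (simp add: inv_mult_group m_assoc)
  ultimately have "((x \<otimes> h \<otimes> inv x) \<otimes> inv h) \<otimes> h \<in> N"
    using h subgroup.m_closed[OF N] by auto
  then show "x \<otimes> h \<otimes> inv x \<in> N" using x hC by (simp add: m_assoc)
qed

lemma set_mult_Int_eq:
  assumes K: "subgroup K G" and M: "subgroup M G" and A: "subgroup A G"
    and MA: "M \<subseteq> A" and KAM: "K \<inter> A \<subseteq> M"
  shows "(K <#> M) \<inter> A = M"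
proof
  show "M \<subseteq> (K <#> M) \<inter> A" using subset_set_mult_left[OF K] subgroup.subset[OF M] MA by blast
  show "(K <#> M) \<inter> A \<subseteq> M"
  proof
    fix x assume x: "x \<in> (K <#> M) \<inter> A"
    then obtain k m where km: "k \<in> K" "m \<in> M" "x = k \<otimes> m" unfolding set_mult_def by blast
    have kC: "k \<in> carrier G" and mC: "m \<in> carrier G"
      using km subgroup.subset[OF K] subgroup.subset[OF M] by auto
    have "k = x \<otimes> inv m" using km(3) kC mC by (simp add: m_assoc)
    also have "\<dots> \<in> A"
      using x km(2) MA by (intro subgroup.m_closed[OF A] subgroup.m_inv_closed[OF A]) auto
    finally have "k \<in> M" using km(1) KAM by blast
    then show "x \<in> M" using km(2,3) subgroup.m_closed[OF M] by blast
  qed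
qed

lemma set_mult_subset_subgroup:
  assumes "subgroup N G" "K \<subseteq> N" "M \<subseteq> N"
  shows "K <#> M \<subseteq> N"
  using mono_set_mult[OF assms(2,3), of G] subgroup_mult_id[OF assms(1)] by simp

lemma normal_between_set_mult:
  assumes K: "K \<lhd> G" and A: "subgroup A G" and M: "subgroup M G" and MA: "M \<subseteq> A"
    and KAM: "K \<inter> A \<subseteq> M"
    and between_M: "\<And>N'. N' \<lhd> G\<lparr>carrier := A\<rparr> \<Longrightarrow> K \<inter> A \<subseteq> N' \<Longrightarrow> N' \<subseteq> M
                        \<Longrightarrow> N' = K \<inter> A \<or> N' = M"
    and N: "N \<lhd> G" and KN: "K \<subseteq> N" and NKM: "N \<subseteq> K <#> M"
  shows "N = K \<or> N = K <#> M"
proof -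
  have sK: "subgroup K G" by (rule normal_imp_subgroup[OF K])
  have sN: "subgroup N G" by (rule normal_imp_subgroup[OF N])
  have "N \<inter> A \<subseteq> (K <#> M) \<inter> A" using NKM by blast
  then have "N \<inter> A \<subseteq> M" using set_mult_Int_eq[OF sK M A MA KAM] by simp
  then have "N \<inter> A = K \<inter> A \<or> N \<inter> A = M"
    using between_M[OF normal_Int_subgroup[OF A N]] KN by blast
  then show ?thesis
  proof
    assume NA: "N \<inter> A = K \<inter> A"
    have "N \<subseteq> K"
    proof
      fix x assume x: "x \<in> N"
      then obtain k m where km: "k \<in> K" "m \<in> M" "x = k \<otimes> m"
        using NKM unfolding set_mult_def by blast
      have kC: "k \<in> carrier G" and mC: "m \<in> carrier G"
        using km subgroup.subset[OF sK] subgroup.subset[OF M] by auto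
      have "m = inv k \<otimes> x" using km(3) kC mC by (simp add: inv_mult_cancel_left)
      also have "\<dots> \<in> N"
        using km(1) KN x by (intro subgroup.m_closed[OF sN] subgroup.m_inv_closed[OF sN]) auto
      finally have "m \<in> K" using km(2) MA NA by blast
      then show "x \<in> K" using km(1,3) subgroup.m_closed[OF sK] by blast
    qed
    then show ?thesis using KN by blast
  next
    assume "N \<inter> A = M"
    then have "K <#> M \<subseteq> N" using set_mult_subset_subgroup[OF sN KN] by blast
    then show ?thesis using NKM by blast
  qed
qed

lemma min_normal_over_join:
  assumes K: "K \<lhd> G" and A: "A \<lhd> G" and ab: "comm_group (G Mod K)"
    and M: "M \<in> min_normal_over G A (K \<inter> A)"
  shows "M \<lhd> G \<and> K <#> M \<in> min_normal_over G (carrier G) K"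
proof -
  have sK: "subgroup K G" by (rule normal_imp_subgroup[OF K])
  have sA: "subgroup A G" by (rule normal_imp_subgroup[OF A])
  have AG: "group (G\<lparr>carrier := A\<rparr>)" by (rule subgroup.subgroup_is_group[OF sA is_group])
  have nD: "K \<inter> A \<lhd> G\<lparr>carrier := A\<rparr>" by (rule normal_Int_subgroup[OF sA K])
  have nM: "M \<lhd> G\<lparr>carrier := A\<rparr>" and DM: "K \<inter> A \<subset> M"
    and mnM: "minimal_normal (G\<lparr>carrier := A\<rparr> Mod (K \<inter> A)) ((\<lambda>l. (K \<inter> A) #>\<^bsub>G\<lparr>carrier := A\<rparr>\<^esub> l) ` M)"
    using M by (simp_all add: min_normal_over_def)
  have sMA: "subgroup M (G\<lparr>carrier := A\<rparr>)" by (rule normal_imp_subgroup[OF nM])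
  have sM: "subgroup M G" by (rule incl_subgroup[OF sA sMA])
  have MA: "M \<subseteq> A" using subgroup.subset[OF sMA] by simp
  define L where "L = K <#> M"
  have sL: "subgroup L G"
    unfolding L_def using K sM
    by (intro second_isomorphism_grp.normal_set_mult_subgroup)
       (simp add: second_isomorphism_grp_def second_isomorphism_grp_axioms_def)
  have KL: "K \<subseteq> L" unfolding L_def by (rule subset_set_mult_right[OF sM subgroup.subset[OF sK]])
  have nL: "L \<lhd> G" by (rule normal_if_comm_Mod[OF K ab sL KL])
  have "L \<inter> A = M" unfolding L_def using set_mult_Int_eq[OF sK sM sA MA] DM by blast
  then have nMG: "M \<lhd> G" using normal_subgroup_intersect[OF nL A] by simp
  have "K \<subset> L" using KL \<open>L \<inter> A = M\<close> DM by blast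
  moreover have "minimal_normal (G Mod K) ((\<lambda>l. K #> l) ` L)"
  proof (rule minimal_normal_ModI[OF K nL \<open>K \<subset> L\<close>])
    fix N assume "N \<lhd> G" "K \<subseteq> N" "N \<subseteq> L"
    moreover have "N' = K \<inter> A \<or> N' = M"
      if "N' \<lhd> G\<lparr>carrier := A\<rparr>" "K \<inter> A \<subseteq> N'" "N' \<subseteq> M" for N'
      using group.minimal_normal_ModD[OF AG nD nM _ that] mnM by simp
    ultimately show "N = K \<or> N = L"
      unfolding L_def using normal_between_set_mult[OF K sA sM MA] DM by blast
  qed
  ultimately show ?thesis using nL nMG by (simp add: min_normal_over_def L_def)
qed

end

lemma min_normal_over_carrier_update [simp]:
  "min_normal_over (G\<lparr>carrier := H\<rparr>) S K = min_normal_over G S K"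
  by (simp add: min_normal_over_def)

lemma (in group) min_normal_over_Int_join:
  assumes H: "subgroup H G" and K: "K \<lhd> G\<lparr>carrier := H\<rparr>" and A: "A \<lhd> G\<lparr>carrier := H\<rparr>"
    and ab: "comm_group (G\<lparr>carrier := H\<rparr> Mod K)" and M: "M \<in> min_normal_over G A (K \<inter> A)"
  shows "M \<lhd> G\<lparr>carrier := H\<rparr> \<and> K <#> M \<in> min_normal_over G H K"
  using group.min_normal_over_join[OF subgroup.subgroup_is_group[OF H is_group] K A ab] M by simp

section \<open>The rational group algebra\<close>

context group begin

lemma sum_carrier_translate:
  assumes "a \<in> carrier G"
  shows "(\<Sum>g\<in>carrier G. f (a \<otimes> g)) = (\<Sum>g\<in>carrier G. f g)"
proof -
  have "bij_betw (\<lambda>g. a \<otimes> g) (carrier G) (carrier G)"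
    by (rule bij_betwI[where g="\<lambda>g. inv a \<otimes> g"])
       (auto simp: assms inv_mult_cancel_left mult_inv_cancel_left)
  then show ?thesis by (rule sum.reindex_bij_betw)
qed

lemma sum_subgroup_inv:
  assumes "subgroup N G"
  shows "(\<Sum>h\<in>N. f (inv h)) = (\<Sum>h\<in>N. f h)"
proof -
  have "bij_betw (\<lambda>h. inv h) N N"
    using subgroup.m_inv_closed[OF assms] subgroup.subset[OF assms]
    by (intro bij_betwI[where g = "\<lambda>h. inv h"]) auto
  then show ?thesis by (rule sum.reindex_bij_betw)
qed

lemma ga_mult_assoc: "ga_mult G (ga_mult G x y) z = ga_mult G x (ga_mult G y z)"
proof (rule ext)
  fix g
  show "ga_mult G (ga_mult G x y) z g = ga_mult G x (ga_mult G y z) g"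
  proof (cases "g \<in> carrier G")
    case g: True
    have inner: "(\<Sum>h\<in>carrier G. y (inv k \<otimes> h) * z (inv h \<otimes> g))
        = (\<Sum>h\<in>carrier G. y h * z (inv h \<otimes> (inv k \<otimes> g)))" if k: "k \<in> carrier G" for k
    proof -
      have "(\<Sum>h\<in>carrier G. y (inv k \<otimes> h) * z (inv h \<otimes> g))
          = (\<Sum>h\<in>carrier G. y (inv k \<otimes> (k \<otimes> h)) * z (inv (k \<otimes> h) \<otimes> g))"
        using sum_carrier_translate[OF k, of "\<lambda>h. y (inv k \<otimes> h) * z (inv h \<otimes> g)"] by simp
      also have "\<dots> = (\<Sum>h\<in>carrier G. y h * z (inv h \<otimes> (inv k \<otimes> g)))"
        by (rule sum.cong[OF refl]) (simp add: k g inv_mult_group m_assoc[symmetric])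
      finally show ?thesis .
    qed
    have "ga_mult G (ga_mult G x y) z g
        = (\<Sum>h\<in>carrier G. (\<Sum>k\<in>carrier G. x k * y (inv k \<otimes> h)) * z (inv h \<otimes> g))"
      using g by (simp add: ga_mult_def)
    also have "\<dots> = (\<Sum>k\<in>carrier G. x k * (\<Sum>h\<in>carrier G. y (inv k \<otimes> h) * z (inv h \<otimes> g)))"
      unfolding sum_distrib_right sum_distrib_left by (subst sum.swap) (simp add: mult.assoc)
    also have "\<dots> = (\<Sum>k\<in>carrier G. x k * (\<Sum>h\<in>carrier G. y h * z (inv h \<otimes> (inv k \<otimes> g))))"
      using inner by simp
    also have "\<dots> = ga_mult G x (ga_mult G y z) g"
      using g by (simp add: ga_mult_def)
    finally show ?thesis .
  qed (simp add: ga_mult_def)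
qed

lemma ga_mult_sub_right: "ga_mult G x (ga_sub y z) = ga_sub (ga_mult G x y) (ga_mult G x z)"
  by (rule ext) (simp add: ga_mult_def ga_sub_def algebra_simps sum_subtractf)

lemma ga_mult_sub_left: "ga_mult G (ga_sub y z) x = ga_sub (ga_mult G y x) (ga_mult G z x)"
  by (rule ext) (simp add: ga_mult_def ga_sub_def algebra_simps sum_subtractf)

lemma ga_mult_zero_right: "ga_mult G x (\<lambda>_. 0) = (\<lambda>_. 0)"
  by (rule ext) (simp add: ga_mult_def)

lemma ga_mult_zero_left: "ga_mult G (\<lambda>_. 0) x = (\<lambda>_. 0)"
  by (rule ext) (simp add: ga_mult_def)

lemma ga_sub_self: "ga_sub x x = (\<lambda>_. 0)"
  by (simp add: ga_sub_def)

lemma ga_sub_zero: "ga_sub x (\<lambda>_. 0) = x"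
  by (simp add: ga_sub_def)

lemma in_ga_sub: "in_ga S x \<Longrightarrow> in_ga S y \<Longrightarrow> in_ga S (ga_sub x y)"
  by (simp add: in_ga_def ga_sub_def)

lemma in_ga_mono: "S \<subseteq> T \<Longrightarrow> in_ga S x \<Longrightarrow> in_ga T x"
  unfolding in_ga_def by blast

lemma hat_in_ga: "N \<subseteq> S \<Longrightarrow> in_ga S (hat N)"
  by (auto simp: in_ga_def hat_def)

lemma in_ga_mult:
  assumes S: "subgroup S G" and x: "in_ga S x" and y: "in_ga S y"
  shows "in_ga S (ga_mult G x y)"
  unfolding in_ga_def
proof (intro allI impI)
  fix g assume g: "g \<notin> S"
  have "x h * y (inv h \<otimes> g) = 0" if "h \<in> carrier G" "g \<in> carrier G" for h
  proof (cases "h \<in> S")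
    case True
    then have "inv h \<otimes> g \<notin> S"
      using g that subgroup_mult_left_mem_iff[OF S subgroup.m_inv_closed[OF S True]] by simp
    then show ?thesis using y by (simp add: in_ga_def)
  qed (use x in \<open>simp add: in_ga_def\<close>)
  then show "ga_mult G x y g = 0" unfolding ga_mult_def by (auto intro: sum.neutral)
qed

lemma bij_betw_conj_normal:
  assumes S: "subgroup S G" and N: "N \<lhd> G\<lparr>carrier := S\<rparr>" and g: "g \<in> S"
  shows "bij_betw (\<lambda>h. g \<otimes> h \<otimes> inv g) N N"
proof -
  have conj: "a \<otimes> h \<otimes> inv a \<in> N" if "a \<in> S" "h \<in> N" for a h
    using normal.inv_op_closed2[OF N] that m_inv_consistent[OF S] by simp
  have NC: "N \<subseteq> carrier G"
    using subgroup.subset[OF normal_imp_subgroup[OF N]] subgroup.subset[OF S] by auto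
  have gC: "g \<in> carrier G" using g subgroup.subset[OF S] by blast
  show ?thesis
  proof (rule bij_betwI[where g="\<lambda>h. inv g \<otimes> h \<otimes> g"])
    show "(\<lambda>h. g \<otimes> h \<otimes> inv g) \<in> N \<rightarrow> N" using conj g by blast
    show "(\<lambda>h. inv g \<otimes> h \<otimes> g) \<in> N \<rightarrow> N"
      using conj[OF subgroup.m_inv_closed[OF S g]] gC by simp
  qed (use NC gC in \<open>auto simp: m_assoc inv_mult_cancel_left mult_inv_cancel_left\<close>)
qed

lemma sum_normal_left_eq_right:
  assumes S: "subgroup S G" and N: "N \<lhd> G\<lparr>carrier := S\<rparr>" and y: "in_ga S y"
    and g: "g \<in> carrier G"
  shows "(\<Sum>h\<in>N. y (h \<otimes> g)) = (\<Sum>h\<in>N. y (g \<otimes> h))"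
proof -
  have NS: "N \<subseteq> S" using subgroup.subset[OF normal_imp_subgroup[OF N]] by simp
  have NC: "N \<subseteq> carrier G" using NS subgroup.subset[OF S] by blast
  show ?thesis
  proof (cases "g \<in> S")
    case True
    have "(\<Sum>h\<in>N. y (h \<otimes> g)) = (\<Sum>h\<in>N. y ((g \<otimes> h \<otimes> inv g) \<otimes> g))"
      using bij_betw_conj_normal[OF S N True] by (rule sum.reindex_bij_betw[symmetric])
    also have "\<dots> = (\<Sum>h\<in>N. y (g \<otimes> h))"
      using NC g by (intro sum.cong) (auto simp: m_assoc)
    finally show ?thesis .
  next
    case False
    then have "h \<otimes> g \<notin> S" "g \<otimes> h \<notin> S" if "h \<in> N" for h
      using that NS NC g subgroup_mult_left_mem_iff[OF S] subgroup_mult_right_mem_iff[OF S]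
      by auto
    then show ?thesis using y by (simp add: in_ga_def)
  qed
qed

lemma set_mult_fiber_empty:
  assumes "N \<subseteq> carrier G" "g \<in> carrier G" "g \<notin> N <#> M"
  shows "{h \<in> N. inv h \<otimes> g \<in> M} = {}"
proof -
  have "g = h \<otimes> (inv h \<otimes> g)" if "h \<in> N" for h
    using that assms(1,2) by (auto simp: mult_inv_cancel_left)
  then show ?thesis using assms(3) unfolding set_mult_def by blast
qed

lemma card_set_mult_fiber:
  assumes N: "subgroup N G" and M: "subgroup M G" and g: "g \<in> N <#> M"
  shows "card {h \<in> N. inv h \<otimes> g \<in> M} = card (N \<inter> M)"
proof -
  obtain n m where n: "n \<in> N" and m: "m \<in> M" and gnm: "g = n \<otimes> m"
    using g unfolding set_mult_def by blast
  have nC: "n \<in> carrier G" and mC: "m \<in> carrier G"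
    using n m subgroup.subset[OF N] subgroup.subset[OF M] by auto
  have "bij_betw (\<lambda>x. n \<otimes> x) (N \<inter> M) {h \<in> N. inv h \<otimes> g \<in> M}"
  proof (rule bij_betwI[where g="\<lambda>h. inv n \<otimes> h"])
    show "(\<lambda>x. n \<otimes> x) \<in> N \<inter> M \<rightarrow> {h \<in> N. inv h \<otimes> g \<in> M}"
    proof
      fix x assume x: "x \<in> N \<inter> M"
      have xC: "x \<in> carrier G" using x subgroup.subset[OF N] by blast
      have "inv (n \<otimes> x) \<otimes> g = inv x \<otimes> m"
        using gnm nC xC mC by (simp add: inv_mult_group m_assoc inv_mult_cancel_left)
      moreover have "inv x \<otimes> m \<in> M"
        using x m by (intro subgroup.m_closed[OF M] subgroup.m_inv_closed[OF M]) auto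
      moreover have "n \<otimes> x \<in> N" using n x subgroup.m_closed[OF N] by blast
      ultimately show "n \<otimes> x \<in> {h \<in> N. inv h \<otimes> g \<in> M}" by simp
    qed
    show "(\<lambda>h. inv n \<otimes> h) \<in> {h \<in> N. inv h \<otimes> g \<in> M} \<rightarrow> N \<inter> M"
    proof
      fix h assume h: "h \<in> {h \<in> N. inv h \<otimes> g \<in> M}"
      have hC: "h \<in> carrier G" using h subgroup.subset[OF N] by blast
      have "inv n \<otimes> h = m \<otimes> inv (inv h \<otimes> g)"
        using gnm nC hC mC
        by (simp add: inv_mult_group m_assoc inv_mult_cancel_left mult_inv_cancel_left)
      moreover have "inv h \<otimes> g \<in> M" using h by simp
      then have "m \<otimes> inv (inv h \<otimes> g) \<in> M"
        by (rule subgroup.m_closed[OF M m subgroup.m_inv_closed[OF M]])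
      moreover have "inv n \<otimes> h \<in> N"
        using n h by (intro subgroup.m_closed[OF N] subgroup.m_inv_closed[OF N]) auto
      ultimately show "inv n \<otimes> h \<in> N \<inter> M" by simp
    qed
  qed (use nC subgroup.subset[OF N] in \<open>auto simp: inv_mult_cancel_left mult_inv_cancel_left\<close>)
  then show ?thesis by (simp add: bij_betw_same_card)
qed

end

locale finite_group = group +
  assumes finite_carrier: "finite (carrier G)"
begin

lemma ga_mult_hat_one_left:
  assumes "in_ga (carrier G) x"
  shows "ga_mult G (hat {\<one>}) x = x"
proof (rule ext)
  fix g
  show "ga_mult G (hat {\<one>}) x g = x g"
  proof (cases "g \<in> carrier G")
    case True
    then have "ga_mult G (hat {\<one>}) x g = (\<Sum>h\<in>carrier G. if h = \<one> then x g else 0)"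
      unfolding ga_mult_def by (auto intro: sum.cong simp: hat_def)
    then show ?thesis using finite_carrier by simp
  qed (use assms in \<open>simp add: ga_mult_def in_ga_def\<close>)
qed

lemma ga_mult_hat_one_right:
  assumes "in_ga (carrier G) x"
  shows "ga_mult G x (hat {\<one>}) = x"
proof (rule ext)
  fix g
  show "ga_mult G x (hat {\<one>}) g = x g"
  proof (cases "g \<in> carrier G")
    case True
    have "inv h \<otimes> g = \<one> \<longleftrightarrow> h = g" if "h \<in> carrier G" for h
      using that True inv_solve_left'[of \<one> h g] by auto
    then have "ga_mult G x (hat {\<one>}) g = (\<Sum>h\<in>carrier G. if h = g then x h else 0)"
      using True unfolding ga_mult_def by (auto intro: sum.cong simp: hat_def)
    then show ?thesis using True finite_carrier by simp
  qed (use assms in \<open>simp add: ga_mult_def in_ga_def\<close>)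
qed

lemma ga_mult_hat_left:
  assumes "N \<subseteq> carrier G" "g \<in> carrier G"
  shows "ga_mult G (hat N) y g = (\<Sum>h\<in>N. y (inv h \<otimes> g)) / of_nat (card N)"
proof -
  have "ga_mult G (hat N) y g = (\<Sum>h\<in>carrier G. if h \<in> N then y (inv h \<otimes> g) / of_nat (card N) else 0)"
    using assms(2) by (auto intro!: sum.cong simp: ga_mult_def hat_def)
  also have "\<dots> = (\<Sum>h\<in>N. y (inv h \<otimes> g) / of_nat (card N))"
    using assms(1) by (simp add: sum.If_cases[OF finite_carrier] Int_absorb1)
  finally show ?thesis by (simp add: sum_divide_distrib)
qed

lemma ga_mult_hat_right:
  assumes N: "subgroup N G" and g: "g \<in> carrier G"
  shows "ga_mult G y (hat N) g = (\<Sum>h\<in>N. y (g \<otimes> h)) / of_nat (card N)"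
proof -
  have "ga_mult G y (hat N) g = (\<Sum>h\<in>carrier G. y (g \<otimes> h) * hat N (inv (g \<otimes> h) \<otimes> g))"
    using g sum_carrier_translate[OF g, symmetric] by (simp add: ga_mult_def)
  also have "\<dots> = (\<Sum>h\<in>carrier G. if h \<in> N then y (g \<otimes> h) / of_nat (card N) else 0)"
  proof (rule sum.cong[OF refl])
    fix h assume h: "h \<in> carrier G"
    have "inv (g \<otimes> h) \<otimes> g = inv h" using h g by (simp add: inv_mult_group m_assoc)
    moreover have "inv h \<in> N \<longleftrightarrow> h \<in> N"
      using h subgroup.m_inv_closed[OF N, of h] subgroup.m_inv_closed[OF N, of "inv h"] by auto
    ultimately show "y (g \<otimes> h) * hat N (inv (g \<otimes> h) \<otimes> g)
        = (if h \<in> N then y (g \<otimes> h) / of_nat (card N) else 0)"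
      by (simp add: hat_def)
  qed
  also have "\<dots> = (\<Sum>h\<in>N. y (g \<otimes> h) / of_nat (card N))"
    using subgroup.subset[OF N] by (simp add: sum.If_cases[OF finite_carrier] Int_absorb1)
  finally show ?thesis by (simp add: sum_divide_distrib)
qed

lemma hat_normal_commute:
  assumes S: "subgroup S G" and N: "N \<lhd> G\<lparr>carrier := S\<rparr>" and y: "in_ga S y"
  shows "ga_mult G (hat N) y = ga_mult G y (hat N)"
proof (rule ext)
  fix g
  have sN: "subgroup N G" by (rule incl_subgroup[OF S normal_imp_subgroup[OF N]])
  show "ga_mult G (hat N) y g = ga_mult G y (hat N) g"
  proof (cases "g \<in> carrier G")
    case g: True
    have "(\<Sum>h\<in>N. y (inv h \<otimes> g)) = (\<Sum>h\<in>N. y (g \<otimes> h))"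
      using sum_subgroup_inv[OF sN, of "\<lambda>h. y (h \<otimes> g)"] sum_normal_left_eq_right[OF S N y g]
      by simp
    then show ?thesis
      using ga_mult_hat_left[OF subgroup.subset[OF sN] g] ga_mult_hat_right[OF sN g] by simp
  qed (simp add: ga_mult_def)
qed

text \<open>The product formula, by double counting the pairs \<open>(h, g)\<close> with \<open>h \<in> N\<close>
  and \<open>h\<inverse>g \<in> M\<close>.\<close>

lemma card_set_mult_Int:
  assumes N: "subgroup N G" and M: "subgroup M G"
  shows "card (N <#> M) * card (N \<inter> M) = card N * card M"
proof -
  have NC: "N \<subseteq> carrier G" and MC: "M \<subseteq> carrier G"
    using subgroup.subset[OF N] subgroup.subset[OF M] .
  have NMC: "N <#> M \<subseteq> carrier G" using NC MC by (auto simp: set_mult_def)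
  have finN: "finite N" using finite_subset[OF NC finite_carrier] .
  have "(\<Sum>g\<in>carrier G. card {h \<in> N. inv h \<otimes> g \<in> M})
      = (\<Sum>g\<in>carrier G. \<Sum>h\<in>N. if inv h \<otimes> g \<in> M then 1 else 0)"
    by (simp add: sum.inter_filter[OF finN, symmetric])
  also have "\<dots> = (\<Sum>h\<in>N. \<Sum>g\<in>carrier G. if inv h \<otimes> g \<in> M then 1 else 0)"
    by (rule sum.swap)
  also have "\<dots> = (\<Sum>h\<in>N. card M)"
  proof (rule sum.cong[OF refl])
    fix h assume "h \<in> N"
    then have hC: "h \<in> carrier G" using NC by blast
    have "(\<Sum>g\<in>carrier G. if inv h \<otimes> g \<in> M then 1 else (0::nat))
        = (\<Sum>g\<in>carrier G. if inv h \<otimes> (h \<otimes> g) \<in> M then 1 else 0)"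
      by (rule sum_carrier_translate[OF hC, symmetric])
    also have "\<dots> = card M"
      using hC MC by (simp add: inv_mult_cancel_left sum.If_cases[OF finite_carrier] Int_absorb1)
    finally show "(\<Sum>g\<in>carrier G. if inv h \<otimes> g \<in> M then 1 else (0::nat)) = card M" .
  qed
  finally have "(\<Sum>g\<in>carrier G. card {h \<in> N. inv h \<otimes> g \<in> M}) = card N * card M" by simp
  moreover have "(\<Sum>g\<in>carrier G. card {h \<in> N. inv h \<otimes> g \<in> M})
      = (\<Sum>g\<in>carrier G. if g \<in> N <#> M then card (N \<inter> M) else 0)"
  proof (rule sum.cong[OF refl])
    fix g assume "g \<in> carrier G"
    then show "card {h \<in> N. inv h \<otimes> g \<in> M} = (if g \<in> N <#> M then card (N \<inter> M) else 0)"
      by (cases "g \<in> N <#> M")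
         (simp_all add: card_set_mult_fiber[OF N M] set_mult_fiber_empty[OF NC])
  qed
  moreover have "\<dots> = card (N <#> M) * card (N \<inter> M)"
    using NMC by (simp add: sum.If_cases[OF finite_carrier] Int_absorb1)
  ultimately show ?thesis by simp
qed

lemma hat_mult_hat:
  assumes N: "subgroup N G" and M: "subgroup M G"
  shows "ga_mult G (hat N) (hat M) = hat (N <#> M)"
proof (rule ext)
  fix g
  have NC: "N \<subseteq> carrier G" and MC: "M \<subseteq> carrier G"
    using subgroup.subset[OF N] subgroup.subset[OF M] .
  have finN: "finite N" using finite_subset[OF NC finite_carrier] .
  have posN: "card N > 0" and posM: "card M > 0"
    using finN finite_subset[OF MC finite_carrier] subgroup.one_closed[OF N]
      subgroup.one_closed[OF M] by (auto simp: card_gt_0_iff)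
  show "ga_mult G (hat N) (hat M) g = hat (N <#> M) g"
  proof (cases "g \<in> carrier G")
    case g: True
    have "(\<Sum>h\<in>N. hat M (inv h \<otimes> g))
        = (\<Sum>h\<in>N. if inv h \<otimes> g \<in> M then 1 / of_nat (card M) else 0)"
      by (simp add: hat_def)
    also have "\<dots> = of_nat (card {h \<in> N. inv h \<otimes> g \<in> M}) / of_nat (card M)"
      by (simp add: sum.inter_filter[OF finN, symmetric])
    finally have fiber: "ga_mult G (hat N) (hat M) g
        = of_nat (card {h \<in> N. inv h \<otimes> g \<in> M}) / of_nat (card M) / of_nat (card N)"
      by (simp add: ga_mult_hat_left[OF NC g])
    show ?thesis
    proof (cases "g \<in> N <#> M")
      case True
      have "(of_nat (card (N <#> M)) :: rat) * of_nat (card (N \<inter> M)) = of_nat (card N) * of_nat (card M)"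
        using card_set_mult_Int[OF N M] by (metis of_nat_mult)
      moreover have "card (N <#> M) > 0"
        using card_set_mult_Int[OF N M] posN posM by (metis mult_eq_0_iff neq0_conv)
      ultimately have "(of_nat (card (N \<inter> M)) :: rat) / of_nat (card M) / of_nat (card N)
          = 1 / of_nat (card (N <#> M))"
        using posN posM by (simp add: field_simps)
      then show ?thesis using fiber True card_set_mult_fiber[OF N M True] by (simp add: hat_def)
    next
      case False
      then show ?thesis using fiber set_mult_fiber_empty[OF NC g False] by (simp add: hat_def)
    qed
  next
    case False
    then show ?thesis using NC MC by (auto simp: ga_mult_def hat_def set_mult_def)
  qed
qed

definition ga_central :: "'a set \<Rightarrow> ('a \<Rightarrow> rat) \<Rightarrow> bool" where
  "ga_central S x \<longleftrightarrow> in_ga S x \<and> (\<forall>y. in_ga S y \<longrightarrow> ga_mult G x y = ga_mult G y x)"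

definition ga_list_prod :: "('c \<Rightarrow> ('a \<Rightarrow> rat)) \<Rightarrow> 'c list \<Rightarrow> ('a \<Rightarrow> rat)" where
  "ga_list_prod f xs = foldr (\<lambda>L acc. ga_mult G (f L) acc) xs (hat {\<one>})"

lemma ga_list_prod_Nil [simp]: "ga_list_prod f [] = hat {\<one>}"
  by (simp add: ga_list_prod_def)

lemma ga_list_prod_Cons [simp]: "ga_list_prod f (a # xs) = ga_mult G (f a) (ga_list_prod f xs)"
  by (simp add: ga_list_prod_def)

lemma ga_prod_eq_list_prod:
  assumes "finite S"
  obtains xs where "set xs = S" "ga_prod G S f = ga_list_prod f xs"
proof -
  let ?xs = "SOME xs. distinct xs \<and> set xs = S"
  have "distinct ?xs \<and> set ?xs = S"
    by (rule someI_ex) (use finite_distinct_list[OF assms] in blast)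
  then show ?thesis using that[of ?xs] by (simp add: ga_prod_def ga_list_prod_def)
qed

lemma ga_central_hat_one:
  assumes "subgroup S G"
  shows "ga_central S (hat {\<one>})"
proof -
  have "in_ga (carrier G) y" if "in_ga S y" for y
    using in_ga_mono[OF subgroup.subset[OF assms] that] .
  then show ?thesis
    using subgroup.one_closed[OF assms] ga_mult_hat_one_left ga_mult_hat_one_right
    unfolding ga_central_def by (auto intro: hat_in_ga)
qed

lemma ga_central_hat_normal:
  assumes S: "subgroup S G" and K: "K \<lhd> G\<lparr>carrier := S\<rparr>"
  shows "ga_central S (hat K)"
  using hat_in_ga subgroup.subset[OF normal_imp_subgroup[OF K]] hat_normal_commute[OF S K]
  unfolding ga_central_def by simp

lemma ga_central_sub:
  assumes "ga_central S x" "ga_central S y"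
  shows "ga_central S (ga_sub x y)"
  unfolding ga_central_def
proof (intro conjI allI impI)
  show "in_ga S (ga_sub x y)" using assms in_ga_sub unfolding ga_central_def by blast
  fix z assume "in_ga S z"
  then have "ga_mult G x z = ga_mult G z x" "ga_mult G y z = ga_mult G z y"
    using assms unfolding ga_central_def by blast+
  then show "ga_mult G (ga_sub x y) z = ga_mult G z (ga_sub x y)"
    by (simp add: ga_mult_sub_left ga_mult_sub_right)
qed

lemma ga_central_mult:
  assumes S: "subgroup S G" and x: "ga_central S x" and y: "ga_central S y"
  shows "ga_central S (ga_mult G x y)"
  unfolding ga_central_def
proof (intro conjI allI impI)
  show "in_ga S (ga_mult G x y)" using in_ga_mult[OF S] x y unfolding ga_central_def by blast
  fix z assume "in_ga S z"
  then show "ga_mult G (ga_mult G x y) z = ga_mult G z (ga_mult G x y)"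
  proof -
    have xz: "ga_mult G x z = ga_mult G z x" and yz: "ga_mult G y z = ga_mult G z y"
      using x y \<open>in_ga S z\<close> unfolding ga_central_def by blast+
    have "ga_mult G (ga_mult G x y) z = ga_mult G x (ga_mult G z y)"
      by (simp only: ga_mult_assoc yz)
    also have "\<dots> = ga_mult G z (ga_mult G x y)"
      by (simp only: xz flip: ga_mult_assoc)
    finally show ?thesis .
  qed
qed

lemma ga_mult_idem_commuting:
  assumes "ga_mult G x x = x" "ga_mult G y y = y" "ga_mult G x y = ga_mult G y x"
  shows "ga_mult G (ga_mult G x y) (ga_mult G x y) = ga_mult G x y"
proof -
  have "ga_mult G (ga_mult G x y) (ga_mult G x y) = ga_mult G x (ga_mult G (ga_mult G y x) y)"
    by (simp add: ga_mult_assoc)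
  also have "\<dots> = ga_mult G (ga_mult G x x) (ga_mult G y y)"
    unfolding assms(3)[symmetric] by (simp add: ga_mult_assoc)
  finally show ?thesis using assms(1,2) by simp
qed

lemma ga_list_prod_central_idem:
  assumes S: "subgroup S G"
    and fs: "\<And>L. L \<in> set xs \<Longrightarrow> ga_central S (f L) \<and> ga_mult G (f L) (f L) = f L"
  shows "ga_central S (ga_list_prod f xs) \<and> ga_mult G (ga_list_prod f xs) (ga_list_prod f xs) = ga_list_prod f xs"
  using fs
proof (induction xs)
  case Nil
  have "in_ga (carrier G) (hat {\<one>})" by (rule hat_in_ga) simp
  then show ?case using ga_central_hat_one[OF S] ga_mult_hat_one_left by simp
next
  case (Cons a xs)
  then have a: "ga_central S (f a)" "ga_mult G (f a) (f a) = f a"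
    and IH: "ga_central S (ga_list_prod f xs)"
      "ga_mult G (ga_list_prod f xs) (ga_list_prod f xs) = ga_list_prod f xs" by auto
  have "ga_mult G (f a) (ga_list_prod f xs) = ga_mult G (ga_list_prod f xs) (f a)"
    using a(1) IH(1) unfolding ga_central_def by blast
  then show ?case using ga_central_mult[OF S a(1) IH(1)] ga_mult_idem_commuting[OF a(2) IH(2)] by simp
qed

lemma ga_list_prod_absorb_left:
  assumes "xs \<noteq> []" "\<And>L. L \<in> set xs \<Longrightarrow> ga_mult G u (f L) = f L"
  shows "ga_mult G u (ga_list_prod f xs) = ga_list_prod f xs"
  using assms by (cases xs) (simp_all flip: ga_mult_assoc)

lemma ga_list_prod_absorb_right:
  assumes "in_ga (carrier G) x" "\<And>L. L \<in> set xs \<Longrightarrow> ga_mult G (f L) x = x"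
  shows "ga_mult G (ga_list_prod f xs) x = x"
  using assms(2) by (induction xs) (simp_all add: ga_mult_hat_one_left[OF assms(1)] ga_mult_assoc)

lemma ga_list_prod_eq_zero:
  assumes u: "in_ga S u" and fs: "\<And>L. L \<in> set xs \<Longrightarrow> ga_central S (f L)"
    and L: "L \<in> set xs" and zero: "ga_mult G u (f L) = (\<lambda>_. 0)"
  shows "ga_mult G u (ga_list_prod f xs) = (\<lambda>_. 0)"
  using fs L
proof (induction xs)
  case (Cons a xs)
  show ?case
  proof (cases "a = L")
    case True
    then show ?thesis using zero by (simp add: ga_mult_zero_left flip: ga_mult_assoc)
  next
    case False
    have "ga_mult G u (ga_list_prod f (a # xs)) = ga_mult G (ga_mult G u (f a)) (ga_list_prod f xs)"
      by (simp add: ga_mult_assoc)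
    also have "ga_mult G u (f a) = ga_mult G (f a) u"
      using Cons.prems(1)[of a] u unfolding ga_central_def by simp
    also have "ga_mult G (ga_mult G (f a) u) (ga_list_prod f xs)
        = ga_mult G (f a) (ga_mult G u (ga_list_prod f xs))"
      by (rule ga_mult_assoc)
    also have "ga_mult G u (ga_list_prod f xs) = (\<lambda>_. 0)"
      using Cons False by simp
    finally show ?thesis by (simp add: ga_mult_zero_right)
  qed
qed simp

section \<open>The idempotents \<open>\<epsilon>(H,K)\<close>\<close>

lemma hat_mult_hat_subset:
  assumes K: "subgroup K G" and L: "subgroup L G" and KL: "K \<subseteq> L"
  shows "ga_mult G (hat K) (hat L) = hat L" "ga_mult G (hat L) (hat K) = hat L"
proof -
  have "K <#> L = L"
    using set_mult_subset_subgroup[OF L KL order_refl]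
      subset_set_mult_left[OF K subgroup.subset[OF L]] by blast
  moreover have "L <#> K = L"
    using set_mult_subset_subgroup[OF L order_refl KL]
      subset_set_mult_right[OF K subgroup.subset[OF L]] by blast
  ultimately show "ga_mult G (hat K) (hat L) = hat L" "ga_mult G (hat L) (hat K) = hat L"
    using hat_mult_hat[OF K L] hat_mult_hat[OF L K] by simp_all
qed

lemma hat_sub_hat_idem:
  assumes K: "subgroup K G" and L: "subgroup L G" and KL: "K \<subseteq> L"
  shows "ga_mult G (ga_sub (hat K) (hat L)) (ga_sub (hat K) (hat L)) = ga_sub (hat K) (hat L)"
  using hat_mult_hat_subset[OF K K order_refl] hat_mult_hat_subset[OF L L order_refl]
    hat_mult_hat_subset[OF K L KL]
  by (simp add: ga_mult_sub_left ga_mult_sub_right ga_sub_self ga_sub_zero)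

lemma hat_mult_hat_sub_hat:
  assumes D: "subgroup D G" and K: "subgroup K G" and L: "subgroup L G"
    and DK: "D \<subseteq> K" and KL: "K \<subseteq> L"
  shows "ga_mult G (hat D) (ga_sub (hat K) (hat L)) = ga_sub (hat K) (hat L)"
  using DK KL hat_mult_hat_subset(1)[OF D K DK] hat_mult_hat_subset(1)[OF D L]
  by (simp add: ga_mult_sub_right)

lemma finite_min_normal_over:
  assumes "subgroup S G"
  shows "finite (min_normal_over G S K)"
proof -
  have "min_normal_over G S K \<subseteq> Pow S"
    using subgroup.subset[OF normal_imp_subgroup] by (fastforce simp: min_normal_over_def)
  then show ?thesis
    using finite_subset[OF subgroup.subset[OF assms] finite_carrier] finite_subset by blast
qed

lemma min_normal_over_nonempty:
  assumes S: "subgroup S G" and K: "K \<lhd> G\<lparr>carrier := S\<rparr>" and SK: "S \<noteq> K"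
  shows "min_normal_over G S K \<noteq> {}"
proof -
  have "finite (carrier (G\<lparr>carrier := S\<rparr>))"
    using finite_subset[OF subgroup.subset[OF S] finite_carrier] by simp
  then obtain L where "L \<lhd> G\<lparr>carrier := S\<rparr>" "K \<subset> L"
      "minimal_normal (G\<lparr>carrier := S\<rparr> Mod K) ((\<lambda>l. K #>\<^bsub>G\<lparr>carrier := S\<rparr>\<^esub> l) ` L)"
    using group.exists_minimal_normal_Mod[OF subgroup.subgroup_is_group[OF S is_group] _ K] SK
    by auto
  then have "L \<in> min_normal_over G S K" by (simp add: min_normal_over_def)
  then show ?thesis by blast
qed

lemma eps_eq_list_prod:
  assumes "subgroup S G" "S \<noteq> K"
  obtains xs where "set xs = min_normal_over G S K"
    "eps G S K = ga_list_prod (\<lambda>L. ga_sub (hat K) (hat L)) xs"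
  using ga_prod_eq_list_prod[OF finite_min_normal_over[OF assms(1)]] assms(2)
  by (metis eps_def)

lemma eps_central_idem:
  assumes T: "subgroup T G" and S: "subgroup S G" and K: "K \<lhd> G\<lparr>carrier := T\<rparr>"
    and nL: "\<And>L. L \<in> min_normal_over G S K \<Longrightarrow> L \<lhd> G\<lparr>carrier := T\<rparr>"
  shows "ga_central T (eps G S K) \<and> ga_mult G (eps G S K) (eps G S K) = eps G S K"
proof (cases "S = K")
  case True
  have "subgroup K G" by (rule incl_subgroup[OF T normal_imp_subgroup[OF K]])
  then show ?thesis
    using True ga_central_hat_normal[OF T K] hat_mult_hat_subset[of K K] by (simp add: eps_def)
next
  case False
  then obtain xs where xs: "set xs = min_normal_over G S K"
    "eps G S K = ga_list_prod (\<lambda>L. ga_sub (hat K) (hat L)) xs"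
    by (rule eps_eq_list_prod[OF S])
  have "ga_central T (ga_sub (hat K) (hat L)) \<and>
        ga_mult G (ga_sub (hat K) (hat L)) (ga_sub (hat K) (hat L)) = ga_sub (hat K) (hat L)"
    if "L \<in> min_normal_over G S K" for L
  proof
    show "ga_central T (ga_sub (hat K) (hat L))"
      using ga_central_sub ga_central_hat_normal[OF T K] ga_central_hat_normal[OF T nL[OF that]]
      by blast
    show "ga_mult G (ga_sub (hat K) (hat L)) (ga_sub (hat K) (hat L)) = ga_sub (hat K) (hat L)"
      using that incl_subgroup[OF T normal_imp_subgroup[OF K]]
        incl_subgroup[OF T normal_imp_subgroup[OF nL[OF that]]]
      by (intro hat_sub_hat_idem) (auto simp: min_normal_over_def)
  qed
  then show ?thesis unfolding xs(2) using xs(1) by (intro ga_list_prod_central_idem[OF T]) blast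
qed

lemma hat_mult_eps:
  assumes H: "subgroup H G" and K: "K \<lhd> G\<lparr>carrier := H\<rparr>"
    and D: "subgroup D G" and DK: "D \<subseteq> K"
  shows "ga_mult G (hat D) (eps G H K) = eps G H K"
proof -
  have sK: "subgroup K G" by (rule incl_subgroup[OF H normal_imp_subgroup[OF K]])
  show ?thesis
  proof (cases "H = K")
    case True
    then show ?thesis using hat_mult_hat_subset(1)[OF D sK DK] by (simp add: eps_def)
  next
    case False
    then obtain xs where xs: "set xs = min_normal_over G H K"
      "eps G H K = ga_list_prod (\<lambda>L. ga_sub (hat K) (hat L)) xs"
      by (rule eps_eq_list_prod[OF H])
    have "xs \<noteq> []" using xs(1) min_normal_over_nonempty[OF H K False] by auto
    moreover have "ga_mult G (hat D) (ga_sub (hat K) (hat L)) = ga_sub (hat K) (hat L)"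
      if "L \<in> min_normal_over G H K" for L
      using that DK incl_subgroup[OF H normal_imp_subgroup]
      by (intro hat_mult_hat_sub_hat[OF D sK]) (auto simp: min_normal_over_def)
    ultimately show ?thesis unfolding xs(2) using xs(1) by (intro ga_list_prod_absorb_left) auto
  qed
qed

lemma hat_mult_eps_eq_zero:
  assumes H: "subgroup H G" and K: "K \<lhd> G\<lparr>carrier := H\<rparr>"
    and M: "subgroup M G" and KM: "K <#> M \<in> min_normal_over G H K"
  shows "ga_mult G (hat M) (eps G H K) = (\<lambda>_. 0)"
proof -
  define L where "L = K <#> M"
  have sK: "subgroup K G" by (rule incl_subgroup[OF H normal_imp_subgroup[OF K]])
  have nL: "L \<lhd> G\<lparr>carrier := H\<rparr>" and KL: "K \<subset> L"
    using KM by (simp_all add: min_normal_over_def L_def)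
  have sL: "subgroup L G" by (rule incl_subgroup[OF H normal_imp_subgroup[OF nL]])
  have M_sub_L: "M \<subseteq> L" unfolding L_def by (rule subset_set_mult_left[OF sK subgroup.subset[OF M]])
  have LH: "L \<subseteq> H" using subgroup.subset[OF normal_imp_subgroup[OF nL]] by simp
  have inM: "in_ga H (hat M)" using M_sub_L LH by (intro hat_in_ga) blast
  have "H \<noteq> K" using KL LH by blast
  then obtain xs where xs: "set xs = min_normal_over G H K"
    "eps G H K = ga_list_prod (\<lambda>L. ga_sub (hat K) (hat L)) xs"
    by (rule eps_eq_list_prod[OF H])
  have "ga_mult G (hat M) (hat K) = ga_mult G (hat K) (hat M)"
    using hat_normal_commute[OF H K inM] by simp
  also have "\<dots> = hat L" unfolding L_def by (rule hat_mult_hat[OF sK M])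
  finally have "ga_mult G (hat M) (ga_sub (hat K) (hat L)) = (\<lambda>_. 0)"
    using hat_mult_hat_subset(1)[OF M sL M_sub_L] by (simp add: ga_mult_sub_right ga_sub_self)
  moreover have "ga_central H (ga_sub (hat K) (hat L'))" if "L' \<in> min_normal_over G H K" for L'
    using that ga_central_sub ga_central_hat_normal[OF H K] ga_central_hat_normal[OF H]
    by (simp add: min_normal_over_def)
  ultimately show ?thesis
    unfolding xs(2) using xs(1) KM inM
    by (intro ga_list_prod_eq_zero[where S = H and L = L]) (auto simp: L_def)
qed

lemma eps_mult_eps:
  assumes H: "subgroup H G" and K: "K \<lhd> G\<lparr>carrier := H\<rparr>" and A: "A \<lhd> G\<lparr>carrier := H\<rparr>"
    and ab: "comm_group (G\<lparr>carrier := H\<rparr> Mod K)"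
  shows "ga_mult G (eps G A (K \<inter> A)) (eps G H K) = eps G H K"
proof -
  have sA: "subgroup A G" by (rule incl_subgroup[OF H normal_imp_subgroup[OF A]])
  have sD: "subgroup (K \<inter> A) G"
    using incl_subgroup[OF H normal_imp_subgroup[OF K]] sA by (rule subgroups_Inter_pair)
  have absorb: "ga_mult G (hat (K \<inter> A)) (eps G H K) = eps G H K"
    by (rule hat_mult_eps[OF H K sD]) blast
  show ?thesis
  proof (cases "A = K \<inter> A")
    case True
    then show ?thesis using absorb by (simp add: eps_def)
  next
    case False
    then obtain xs where xs: "set xs = min_normal_over G A (K \<inter> A)"
      "eps G A (K \<inter> A) = ga_list_prod (\<lambda>M. ga_sub (hat (K \<inter> A)) (hat M)) xs"
      by (rule eps_eq_list_prod[OF sA])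
    have "in_ga (carrier G) (eps G H K)"
      using eps_central_idem[OF H H K] in_ga_mono[OF subgroup.subset[OF H]]
      by (auto simp: ga_central_def min_normal_over_def)
    moreover have "ga_mult G (ga_sub (hat (K \<inter> A)) (hat M)) (eps G H K) = eps G H K"
      if "M \<in> min_normal_over G A (K \<inter> A)" for M
    proof -
      have "M \<lhd> G\<lparr>carrier := H\<rparr>" "K <#> M \<in> min_normal_over G H K"
        using min_normal_over_Int_join[OF H K A ab that] by auto
      then have "ga_mult G (hat M) (eps G H K) = (\<lambda>_. 0)"
        using incl_subgroup[OF H normal_imp_subgroup] by (intro hat_mult_eps_eq_zero[OF H K]) auto
      then show ?thesis using absorb by (simp add: ga_mult_sub_left ga_sub_zero)
    qed
    ultimately show ?thesis unfolding xs(2) using xs(1) by (intro ga_list_prod_absorb_right) auto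
  qed
qed

lemma ga_central_idem_diff:
  assumes a: "ga_central S a" "ga_mult G a a = a" and b: "ga_central S b" "ga_mult G b b = b"
    and ab: "ga_mult G a b = b"
  shows "\<exists>e. in_ga S e \<and> ga_mult G e e = e
           \<and> (\<forall>y. in_ga S y \<longrightarrow> ga_mult G e y = ga_mult G y e)
           \<and> ga_mult G e b = (\<lambda>_. 0) \<and> ga_mult G b e = (\<lambda>_. 0) \<and> a = ga_add b e"
proof -
  have ba: "ga_mult G b a = b" using ab a(1) b(1) unfolding ga_central_def by metis
  have "ga_central S (ga_sub a b)" by (rule ga_central_sub[OF a(1) b(1)])
  moreover have "ga_mult G (ga_sub a b) (ga_sub a b) = ga_sub a b"
    using a(2) b(2) ab ba by (simp add: ga_mult_sub_left ga_mult_sub_right ga_sub_self ga_sub_zero)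
  moreover have "ga_mult G (ga_sub a b) b = (\<lambda>_. 0)" "ga_mult G b (ga_sub a b) = (\<lambda>_. 0)"
    using b(2) ab ba by (simp_all add: ga_mult_sub_left ga_mult_sub_right ga_sub_self)
  moreover have "a = ga_add b (ga_sub a b)" by (simp add: ga_add_def ga_sub_def)
  ultimately show ?thesis unfolding ga_central_def by blast
qed

end

theorem lemma6:
  fixes G :: "('a, 'b) monoid_scheme" and H K A :: "'a set"
  assumes "group G" and "finite (carrier G)"
    and "subgroup H G"
    and "K \<lhd> G\<lparr>carrier := H\<rparr>"
    and "cyclic_group (G\<lparr>carrier := H\<rparr> Mod K)"
    and "A \<lhd> G\<lparr>carrier := H\<rparr>"
  shows "\<exists>e. in_ga H e
           \<and> ga_mult G e e = e
           \<and> (\<forall>y. in_ga H y \<longrightarrow> ga_mult G e y = ga_mult G y e)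
           \<and> ga_mult G e (eps G H K) = (\<lambda>_. 0)
           \<and> ga_mult G (eps G H K) e = (\<lambda>_. 0)
           \<and> eps G A (K \<inter> A) = ga_add (eps G H K) e"
proof -
  note H = assms(3) and K = assms(4) and A = assms(6)
  interpret finite_group G
    using assms(1,2) by (simp add: finite_group_def finite_group_axioms_def)
  have ab: "comm_group (G\<lparr>carrier := H\<rparr> Mod K)"
    using group.cyclic_imp_abelian_group[OF normal.factorgroup_is_group[OF K] assms(5)] .
  have sA: "subgroup A G" by (rule incl_subgroup[OF H normal_imp_subgroup[OF A]])
  have nD: "K \<inter> A \<lhd> G\<lparr>carrier := H\<rparr>"
    by (rule group.normal_subgroup_intersect[OF subgroup.subgroup_is_group[OF H is_group] K A])
  have "ga_central H (eps G H K) \<and> ga_mult G (eps G H K) (eps G H K) = eps G H K"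
    by (rule eps_central_idem[OF H H K]) (simp add: min_normal_over_def)
  moreover have "ga_central H (eps G A (K \<inter> A))
      \<and> ga_mult G (eps G A (K \<inter> A)) (eps G A (K \<inter> A)) = eps G A (K \<inter> A)"
    using min_normal_over_Int_join[OF H K A ab] by (intro eps_central_idem[OF H sA nD]) blast
  ultimately show ?thesis
    using ga_central_idem_diff eps_mult_eps[OF H K A ab] by blast
qed

end
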